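(* Let $C\in\mathbb D$ with basis $c_i=\delta_{\lambda_i}\circ(\partial_z+\gamma_i)$, $i=1,\dots,n$. Then the $N=rn$ functions $c_i(\hat f_j)$, $1\le i\le n$, $1\le j\le r$, are linearly independent.
   Context: Fix an integer $r>1$ and constants $a_1,\dots,a_{r-2}\in\mathbb C$, and let $L_0=\partial^r-a_{r-2}\partial^{r-2}-\cdots-a_1\partial-x$, where $\partial=d/dx$. Fix a basis $f_1,\dots,f_r$ of $\ker L_0$. For a function $f$ of one variable write $\hat f(x,z)=f(x+z)$. $\mathcal S$ denotes the space of finitely supported distributions in the $z$-plane: finite linear combinations of $\delta_\lambda\circ\partial_z^j$ ($\lambda\in\mathbb C$, $j\ge0$), where $\delta_\lambda$ evaluates its argument at $z=\lambda$; applied to a function $\psi(x,z)$ such a distribution acts in the $z$ variable and yields a function of $x$. $\mathbb D$ is the set of finite-dimensional subspaces $C\subset\mathcal S$ having a basis $c_i=\delta_{\lambda_i}\circ(\partial_z+\gamma_i)$, $i=1,\dots,n$ ($n\ge1$), with $\lambda_1,\dots,\lambda_n$ pairwise distinct and $\gamma_i\in\mathbb C$. *)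

theory Defs
  imports "HOL-Analysis.Analysis"
begin

definition L0 :: "nat \<Rightarrow> (nat \<Rightarrow> complex) \<Rightarrow> (complex \<Rightarrow> complex) \<Rightarrow> complex \<Rightarrow> complex" where
  "L0 r a f x = (deriv ^^ r) f x - (\<Sum>k = 1..r - 2. a k * (deriv ^^ k) f x) - x * f x"

definition kerL0 :: "nat \<Rightarrow> (nat \<Rightarrow> complex) \<Rightarrow> (complex \<Rightarrow> complex) set" where
  "kerL0 r a = {f. f holomorphic_on UNIV \<and> (\<forall>x. L0 r a f x = 0)}"

definition lin_indep_fam :: "nat \<Rightarrow> (nat \<Rightarrow> 'a \<Rightarrow> complex) \<Rightarrow> bool" where
  "lin_indep_fam m g \<longleftrightarrow> (\<forall>c. (\<forall>x. (\<Sum>k<m. c k * g k x) = 0) \<longrightarrow> (\<forall>k<m. c k = 0))"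

definition is_basis_kerL0 :: "nat \<Rightarrow> (nat \<Rightarrow> complex) \<Rightarrow> (nat \<Rightarrow> complex \<Rightarrow> complex) \<Rightarrow> bool" where
  "is_basis_kerL0 r a f \<longleftrightarrow>
     (\<forall>j<r. f j \<in> kerL0 r a) \<and> lin_indep_fam r f \<and>
     (\<forall>g\<in>kerL0 r a. \<exists>c. \<forall>x. g x = (\<Sum>j<r. c j * f j x))"

definition hat :: "(complex \<Rightarrow> complex) \<Rightarrow> complex \<Rightarrow> complex \<Rightarrow> complex" where
  "hat f x z = f (x + z)"

text \<open>The distribution delta_lam o (d_z + gam), acting in z on psi(x,z), giving a function of x.\<close>
definition delta_op :: "complex \<Rightarrow> complex \<Rightarrow> (complex \<Rightarrow> complex \<Rightarrow> complex) \<Rightarrow> complex \<Rightarrow> complex" where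
  "delta_op lam gam psi x = deriv (\<lambda>z. psi x z) lam + gam * psi x lam"

end

theory Submission
  imports Defs "HOL-Complex_Analysis.Complex_Analysis"
begin

text \<open>
  Put \<open>g\<^sub>i = \<Sum>\<^sub>j \<mu>\<^sub>i\<^sub>j f\<^sub>j \<in> ker L\<^sub>0\<close>, \<open>G\<^sub>i(x) = g\<^sub>i(x + \<lambda>\<^sub>i)\<close> and \<open>H\<^sub>i = c\<^sub>i(g\<^sub>i^) = G\<^sub>i' + \<gamma>\<^sub>i G\<^sub>i\<close>.
  Since \<open>L\<^sub>0\<close> ends with the multiplication by \<open>-x\<close>, translating by \<open>\<lambda>\<^sub>i\<close> makes \<open>G\<^sub>i\<close> an
  eigenfunction, \<open>L\<^sub>0 G\<^sub>i = \<lambda>\<^sub>i G\<^sub>i\<close>, and the commutator \<open>[L\<^sub>0, \<partial>] = 1\<close> then gives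
  \<open>(L\<^sub>0 - \<lambda>\<^sub>i) H\<^sub>i = G\<^sub>i\<close>. So the \<open>H\<^sub>i\<close> are generalized eigenvectors of \<open>L\<^sub>0\<close> for the
  distinct eigenvalues \<open>\<lambda>\<^sub>i\<close>; if they sum to zero, each vanishes, hence so does
  \<open>G\<^sub>i = (L\<^sub>0 - \<lambda>\<^sub>i) H\<^sub>i\<close>, and the independence of the \<open>f\<^sub>j\<close> forces \<open>\<mu> = 0\<close>.
\<close>

definition shifted :: "(('a \<Rightarrow> 'b) \<Rightarrow> 'a \<Rightarrow> 'b) \<Rightarrow> 'b \<Rightarrow> ('a \<Rightarrow> 'b) \<Rightarrow> 'a \<Rightarrow> 'b::ring"
  where "shifted T \<mu> f = (\<lambda>x. T f x - \<mu> * f x)"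

locale linear_op_on =
  fixes S :: "('a \<Rightarrow> 'b::field) set" and T :: "('a \<Rightarrow> 'b) \<Rightarrow> 'a \<Rightarrow> 'b"
  assumes zero_mem: "(\<lambda>_. 0) \<in> S"
    and lincomb_mem: "f \<in> S \<Longrightarrow> g \<in> S \<Longrightarrow> (\<lambda>x. c * f x + d * g x) \<in> S"
    and maps_into: "f \<in> S \<Longrightarrow> T f \<in> S"
    and lincomb: "f \<in> S \<Longrightarrow> g \<in> S \<Longrightarrow> T (\<lambda>x. c * f x + d * g x) = (\<lambda>x. c * T f x + d * T g x)"
begin

lemma zero: "T (\<lambda>_. 0) = (\<lambda>_. 0)"
  using lincomb[OF zero_mem zero_mem, of 0 0] by simp

lemma scale: "f \<in> S \<Longrightarrow> T (\<lambda>x. c * f x) = (\<lambda>x. c * T f x)"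
  using lincomb[of f f c 0] by simp

lemma sum_mem: "finite A \<Longrightarrow> (\<And>i. i \<in> A \<Longrightarrow> v i \<in> S) \<Longrightarrow> (\<lambda>x. \<Sum>i\<in>A. v i x) \<in> S"
  by (induction A rule: finite_induct) (use zero_mem lincomb_mem[of _ _ 1 1] in auto)

lemma sum: "finite A \<Longrightarrow> (\<And>i. i \<in> A \<Longrightarrow> v i \<in> S) \<Longrightarrow> T (\<lambda>x. \<Sum>i\<in>A. v i x) = (\<lambda>x. \<Sum>i\<in>A. T (v i) x)"
proof (induction A rule: finite_induct)
  case (insert j A)
  then show ?case
    using lincomb[of "v j" "\<lambda>x. \<Sum>i\<in>A. v i x" 1 1] sum_mem[of A v] by simp
qed (simp add: zero)

lemma shifted_linear_op: "linear_op_on S (shifted T \<mu>)"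
proof
  fix f g c d
  assume "f \<in> S" "g \<in> S"
  then show "(\<lambda>x. c * f x + d * g x) \<in> S" "shifted T \<mu> f \<in> S"
    and "shifted T \<mu> (\<lambda>x. c * f x + d * g x) = (\<lambda>x. c * shifted T \<mu> f x + d * shifted T \<mu> g x)"
    using lincomb_mem[of "T f" f 1 "-\<mu>"] by (auto simp: shifted_def lincomb lincomb_mem maps_into algebra_simps)
qed (fact zero_mem)

lemma shifted_commute: "f \<in> S \<Longrightarrow> shifted T p (shifted T q f) = shifted T q (shifted T p f)"
  using lincomb[of "T f" f 1 "-q"] lincomb[of "T f" f 1 "-p"] maps_into[of f]
  by (simp add: shifted_def algebra_simps)

lemma generalized_eigenvector_unique_eigenvalue:
  assumes v: "v \<in> S" and "p \<noteq> q"
    and p: "shifted T p (shifted T p v) = (\<lambda>_. 0)"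
    and q: "shifted T q (shifted T q v) = (\<lambda>_. 0)"
  shows "v = (\<lambda>_. 0)"
proof -
  interpret N: linear_op_on S "shifted T p" by (fact shifted_linear_op)
  define d where "d = p - q"
  have "d \<noteq> 0" using \<open>p \<noteq> q\<close> by (simp add: d_def)
  have shift_q: "shifted T q w = (\<lambda>x. shifted T p w x + d * w x)" for w
    by (simp add: shifted_def d_def algebra_simps)
  have Nv: "shifted T p v \<in> S" using v by (fact N.maps_into)
  \<comment> \<open>expanding \<open>(N + d)\<^sup>2 v = 0\<close> with \<open>N = T - p\<close> and \<open>N\<^sup>2 v = 0\<close>\<close>
  have expand: "(\<lambda>x. 2 * d * shifted T p v x + d\<^sup>2 * v x) = (\<lambda>_. 0)"
  proof -
    have "shifted T p (\<lambda>x. 1 * shifted T p v x + d * v x) = (\<lambda>x. d * shifted T p v x)"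
      using N.lincomb[OF Nv v, of 1 d] p by simp
    with q show ?thesis
      by (simp add: shift_q power2_eq_square algebra_simps)
  qed
  have "(\<lambda>x. 2 * d * shifted T p (shifted T p v) x + d\<^sup>2 * shifted T p v x) = (\<lambda>_. 0)"
    using arg_cong[OF expand, of "shifted T p"] N.lincomb[OF Nv v] N.zero by simp
  then have "shifted T p v = (\<lambda>_. 0)"
    using p \<open>d \<noteq> 0\<close> by (simp add: fun_eq_iff)
  with expand \<open>d \<noteq> 0\<close> show ?thesis
    by (simp add: fun_eq_iff)
qed

lemma generalized_eigenvectors_sum_zero:
  fixes n :: nat
  assumes "inj_on lam {..<n}"
    and "\<And>i. i < n \<Longrightarrow> v i \<in> S"
    and "\<And>i. i < n \<Longrightarrow> shifted T (lam i) (shifted T (lam i) (v i)) = (\<lambda>_. 0)"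
    and "(\<lambda>x. \<Sum>i<n. v i x) = (\<lambda>_. 0)"
    and "i < n"
  shows "v i = (\<lambda>_. 0)"
  using assms
proof (induction n arbitrary: v i)
  case (Suc n)
  \<comment> \<open>\<open>(T - lam n)\<^sup>2\<close> kills \<open>v n\<close> and preserves the generalized eigenspaces of the others\<close>
  interpret N: linear_op_on S "shifted T (lam n)" by (fact shifted_linear_op)
  define P where "P f = shifted T (lam n) (shifted T (lam n) f)" for f
  have P_mem: "f \<in> S \<Longrightarrow> P f \<in> S" for f
    by (simp add: P_def N.maps_into)
  have P_commute: "shifted T \<mu> (shifted T \<mu> (P f)) = P (shifted T \<mu> (shifted T \<mu> f))" if "f \<in> S" for f \<mu>
    using that N.maps_into linear_op_on.maps_into[OF shifted_linear_op]
    by (simp add: P_def shifted_commute[of _ \<mu> "lam n"])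
  have "P (\<lambda>x. \<Sum>i<Suc n. v i x) = (\<lambda>x. \<Sum>i<Suc n. P (v i) x)"
  proof -
    have "P (\<lambda>x. \<Sum>i<Suc n. v i x) = shifted T (lam n) (\<lambda>x. \<Sum>i<Suc n. shifted T (lam n) (v i) x)"
      unfolding P_def using Suc.prems(2) by (subst N.sum) auto
    also have "\<dots> = (\<lambda>x. \<Sum>i<Suc n. P (v i) x)"
      unfolding P_def using Suc.prems(2) by (subst N.sum) (auto intro: N.maps_into)
    finally show ?thesis .
  qed
  then have "(\<lambda>x. \<Sum>i<Suc n. P (v i) x) = P (\<lambda>x. \<Sum>i<Suc n. v i x)" ..
  also have "\<dots> = (\<lambda>_. 0)"
    using Suc.prems(4) by (simp add: P_def N.zero)
  finally have "(\<lambda>x. \<Sum>i<n. P (v i) x) = (\<lambda>_. 0)"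
    using Suc.prems(3)[of n] by (simp add: P_def)
  moreover have "inj_on lam {..<n}"
    using Suc.prems(1) by (auto simp: inj_on_def)
  moreover have "shifted T (lam i) (shifted T (lam i) (P (v i))) = (\<lambda>_. 0)" if "i < n" for i
  proof -
    have "shifted T (lam i) (shifted T (lam i) (P (v i))) = P (shifted T (lam i) (shifted T (lam i) (v i)))"
      using that Suc.prems(2) by (intro P_commute) simp
    then show ?thesis
      using that Suc.prems(3) by (simp add: P_def N.zero)
  qed
  ultimately have Pv: "P (v i) = (\<lambda>_. 0)" if "i < n" for i
    using Suc.IH[where v="\<lambda>i. P (v i)"] that Suc.prems(2) P_mem by (metis less_SucI)
  have v_lt: "v i = (\<lambda>_. 0)" if "i < n" for i
  proof (rule generalized_eigenvector_unique_eigenvalue)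
    show "lam i \<noteq> lam n"
      using Suc.prems(1) that by (auto simp: inj_on_def)
  qed (use that Pv[OF that] Suc.prems(2,3) in \<open>auto simp: P_def\<close>)
  then have "v n = (\<lambda>_. 0)"
    using Suc.prems(4) by (simp add: fun_eq_iff)
  with v_lt Suc.prems(5) show ?case
    using less_Suc_eq by blast
qed simp

end

lemma higher_deriv_translate: "(deriv ^^ k) (\<lambda>y. g (y + c)) x = (deriv ^^ k) g (x + c)"
proof -
  have "(deriv ^^ k) (\<lambda>y. g (y + c)) x = (deriv ^^ k) ((\<lambda>y. g (y + c)) \<circ> (\<lambda>y. x + y)) 0"
    by (rule higher_deriv_shift_0)
  also have "(\<lambda>y. g (y + c)) \<circ> (\<lambda>y. x + y) = g \<circ> (\<lambda>y. (x + c) + y)"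
    by (auto simp: o_def add_ac)
  also have "(deriv ^^ k) \<dots> 0 = (deriv ^^ k) g (x + c)"
    by (rule higher_deriv_shift_0[symmetric])
  finally show ?thesis .
qed

lemma holomorphic_on_translate: "g holomorphic_on UNIV \<Longrightarrow> (\<lambda>x. g (x + c)) holomorphic_on UNIV"
  using holomorphic_on_compose[of "\<lambda>x. x + c" UNIV g] holomorphic_on_subset[of g UNIV]
  by (simp add: o_def holomorphic_on_add)

lemma L0_holomorphic: "f holomorphic_on UNIV \<Longrightarrow> L0 r a f holomorphic_on UNIV"
  unfolding L0_def by (intro holomorphic_intros holomorphic_higher_deriv) auto

lemma L0_linear_op: "linear_op_on {f. f holomorphic_on UNIV} (L0 r a)"
proof
  fix f g :: "complex \<Rightarrow> complex" and c d :: complex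
  assume "f \<in> {f. f holomorphic_on UNIV}" "g \<in> {f. f holomorphic_on UNIV}"
  then have f: "f holomorphic_on UNIV" and g: "g holomorphic_on UNIV" by auto
  then show "(\<lambda>x. c * f x + d * g x) \<in> {f. f holomorphic_on UNIV}" "L0 r a f \<in> {f. f holomorphic_on UNIV}"
    by (auto intro!: holomorphic_intros L0_holomorphic)
  have "(deriv ^^ k) (\<lambda>x. c * f x + d * g x) x = c * (deriv ^^ k) f x + d * (deriv ^^ k) g x" for k x
    using f g by (subst higher_deriv_add[of _ UNIV])
      (auto intro!: holomorphic_intros simp: higher_deriv_cmult[of _ UNIV])
  then show "L0 r a (\<lambda>x. c * f x + d * g x) = (\<lambda>x. c * L0 r a f x + d * L0 r a g x)"
    by (simp add: L0_def fun_eq_iff algebra_simps sum.distrib sum_distrib_left)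
qed (auto intro: holomorphic_intros)

lemma L0_translate: "L0 r a (\<lambda>y. g (y + c)) x = L0 r a g (x + c) + c * g (x + c)"
  unfolding L0_def higher_deriv_translate by (simp add: algebra_simps)

lemma L0_deriv:
  assumes f: "f holomorphic_on UNIV"
  shows "L0 r a (deriv f) x = deriv (L0 r a f) x + f x"
proof -
  have hd: "((deriv ^^ k) f has_field_derivative (deriv ^^ Suc k) f x) (at x)" for k
    using holomorphic_derivI[OF holomorphic_higher_deriv[OF f, of k] open_UNIV, of x UNIV] by simp
  have "(L0 r a f has_field_derivative
      (deriv ^^ Suc r) f x - (\<Sum>k = 1..r - 2. a k * (deriv ^^ Suc k) f x) - (f x + x * deriv f x)) (at x)"
    unfolding L0_def[abs_def] using hd[of 0]
    by (auto intro!: derivative_eq_intros hd simp: mult.commute)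
  then have "deriv (L0 r a f) x = (deriv ^^ Suc r) f x - (\<Sum>k = 1..r - 2. a k * (deriv ^^ Suc k) f x) - (f x + x * deriv f x)"
    by (rule DERIV_imp_deriv)
  moreover have "(deriv ^^ k) (deriv f) = (deriv ^^ Suc k) f" for k
    by (simp add: funpow_Suc_right del: funpow.simps)
  ultimately show ?thesis unfolding L0_def by simp
qed

lemma delta_op_hat: "delta_op lam gam (hat g) x = deriv g (x + lam) + gam * g (x + lam)"
  using higher_deriv_translate[of 1 g x lam]
  by (simp add: delta_op_def hat_def add.commute)

lemma delta_op_hat_holomorphic:
  "g holomorphic_on UNIV \<Longrightarrow> delta_op lam gam (hat g) holomorphic_on UNIV"
  unfolding delta_op_hat[abs_def]
  by (intro holomorphic_intros holomorphic_on_translate holomorphic_deriv) auto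

lemma delta_op_hat_sum:
  assumes "finite A" "\<And>j. j \<in> A \<Longrightarrow> f j holomorphic_on UNIV"
  shows "delta_op lam gam (hat (\<lambda>y. \<Sum>j\<in>A. \<mu> j * f j y)) x = (\<Sum>j\<in>A. \<mu> j * delta_op lam gam (hat (f j)) x)"
proof -
  have "((\<lambda>y. \<Sum>j\<in>A. \<mu> j * f j y) has_field_derivative (\<Sum>j\<in>A. \<mu> j * deriv (f j) (x + lam))) (at (x + lam))"
    using assms by (intro DERIV_sum DERIV_cmult holomorphic_derivI[of _ UNIV]) auto
  then show ?thesis
    by (simp add: delta_op_hat DERIV_imp_deriv sum.distrib sum_distrib_left algebra_simps)
qed

lemma shifted_L0_translate_kernel:
  assumes "g \<in> kerL0 r a"
  shows "shifted (L0 r a) c (\<lambda>x. g (x + c)) = (\<lambda>_. 0)"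
  using assms by (simp add: shifted_def L0_translate kerL0_def)

lemma shifted_L0_delta_op_hat:
  assumes "g \<in> kerL0 r a"
  shows "shifted (L0 r a) lam (delta_op lam gam (hat g)) = (\<lambda>x. g (x + lam))"
proof -
  interpret L0: linear_op_on "{f. f holomorphic_on UNIV}" "L0 r a" by (fact L0_linear_op)
  define G where "G = (\<lambda>x. g (x + lam))"
  have G: "G holomorphic_on UNIV"
    using assms unfolding G_def kerL0_def by (auto intro: holomorphic_on_translate)
  have dG: "deriv G holomorphic_on UNIV"
    using G by (auto intro: holomorphic_deriv)
  have eigen: "L0 r a G = (\<lambda>x. lam * G x)"
    using shifted_L0_translate_kernel[OF assms, of lam] by (simp add: G_def shifted_def fun_eq_iff)
  have "delta_op lam gam (hat g) = (\<lambda>x. 1 * deriv G x + gam * G x)"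
    using higher_deriv_translate[of 1 g lam] by (simp add: fun_eq_iff delta_op_hat G_def)
  moreover have "L0 r a (\<lambda>x. 1 * deriv G x + gam * G x) = (\<lambda>x. deriv (L0 r a G) x + G x + gam * L0 r a G x)"
    using L0.lincomb[of "deriv G" G 1 gam] G dG by (simp add: L0_deriv)
  moreover have "deriv (L0 r a G) x = lam * deriv G x" for x
    unfolding eigen using G by (intro deriv_cmult holomorphic_on_imp_differentiable_at) auto
  ultimately have "shifted (L0 r a) lam (delta_op lam gam (hat g)) = G"
    by (simp add: shifted_def eigen algebra_simps)
  then show ?thesis
    by (simp add: G_def)
qed

lemma delta_op_hat_generalized_eigenvector:
  "g \<in> kerL0 r a \<Longrightarrow> shifted (L0 r a) lam (shifted (L0 r a) lam (delta_op lam gam (hat g))) = (\<lambda>_. 0)"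
  by (simp add: shifted_L0_delta_op_hat shifted_L0_translate_kernel)

lemma delta_op_hat_eq_zero_imp_zero:
  assumes "g \<in> kerL0 r a" and "delta_op lam gam (hat g) = (\<lambda>_. 0)"
  shows "g = (\<lambda>_. 0)"
proof -
  have "(\<lambda>x. g (x + lam)) = shifted (L0 r a) lam (delta_op lam gam (hat g))"
    using shifted_L0_delta_op_hat[OF assms(1)] by simp
  also have "\<dots> = (\<lambda>_. 0)"
    using linear_op_on.zero[OF L0_linear_op] by (simp add: assms(2) shifted_def)
  finally show ?thesis
    unfolding fun_eq_iff by (metis diff_add_cancel)
qed

lemma kerL0_sum:
  assumes "finite A" "\<And>j. j \<in> A \<Longrightarrow> f j \<in> kerL0 r a"
  shows "(\<lambda>x. \<Sum>j\<in>A. \<mu> j * f j x) \<in> kerL0 r a"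
proof -
  interpret L0: linear_op_on "{f. f holomorphic_on UNIV}" "L0 r a" by (fact L0_linear_op)
  have "f j holomorphic_on UNIV" "L0 r a (f j) = (\<lambda>_. 0)" if "j \<in> A" for j
    using assms(2)[OF that] by (auto simp: kerL0_def)
  with assms(1) show ?thesis
    by (simp add: kerL0_def L0.sum L0.sum_mem L0.scale holomorphic_intros)
qed

theorem mainTheorem4:
  fixes r n :: nat and a :: "nat \<Rightarrow> complex" and f :: "nat \<Rightarrow> complex \<Rightarrow> complex"
    and lam gam :: "nat \<Rightarrow> complex"
  assumes "r > 1"
    and "is_basis_kerL0 r a f"
    and "n \<ge> 1"
    and "inj_on lam {..<n}"
  shows "\<forall>\<mu> :: nat \<Rightarrow> nat \<Rightarrow> complex.
           (\<forall>x. (\<Sum>i<n. \<Sum>j<r. \<mu> i j * delta_op (lam i) (gam i) (hat (f j)) x) = 0)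
           \<longrightarrow> (\<forall>i<n. \<forall>j<r. \<mu> i j = 0)"
proof (intro allI impI)
  fix \<mu> :: "nat \<Rightarrow> nat \<Rightarrow> complex" and i j
  assume combination_zero: "\<forall>x. (\<Sum>i<n. \<Sum>j<r. \<mu> i j * delta_op (lam i) (gam i) (hat (f j)) x) = 0"
    and "i < n" "j < r"
  have f_ker: "f j \<in> kerL0 r a" if "j < r" for j
    using assms(2) that by (simp add: is_basis_kerL0_def)
  define g where "g i = (\<lambda>y. \<Sum>j<r. \<mu> i j * f j y)" for i
  define H where "H i = delta_op (lam i) (gam i) (hat (g i))" for i
  have g_ker: "g i \<in> kerL0 r a" for i
    unfolding g_def by (intro kerL0_sum f_ker) auto
  have "H i x = (\<Sum>j<r. \<mu> i j * delta_op (lam i) (gam i) (hat (f j)) x)" for i x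
    unfolding H_def g_def by (rule delta_op_hat_sum) (use f_ker in \<open>auto simp: kerL0_def\<close>)
  then have "(\<lambda>x. \<Sum>i<n. H i x) = (\<lambda>_. 0)"
    using combination_zero by simp
  moreover have "H i \<in> {f. f holomorphic_on UNIV}" for i
    using g_ker by (simp add: H_def kerL0_def delta_op_hat_holomorphic)
  moreover have "shifted (L0 r a) (lam i) (shifted (L0 r a) (lam i) (H i)) = (\<lambda>_. 0)" for i
    using g_ker by (simp add: H_def delta_op_hat_generalized_eigenvector)
  ultimately have "H i = (\<lambda>_. 0)"
    using linear_op_on.generalized_eigenvectors_sum_zero[OF L0_linear_op assms(4)] \<open>i < n\<close> by blast
  then have "g i = (\<lambda>_. 0)"
    using delta_op_hat_eq_zero_imp_zero[OF g_ker] by (simp add: H_def)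
  then show "\<mu> i j = 0"
    using assms(2) \<open>j < r\<close> by (simp add: g_def fun_eq_iff is_basis_kerL0_def lin_indep_fam_def)
qed

end
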